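(* Let $m\ge2$ be an integer and $z$ a complex number with $0<|z|<1$. Then $$\sum_{k=1}^\infty\frac{\binom{2k}{m}z^{2k}}{(2k-1)(2k)(2k+1)}=\frac{1}{4z}\sum_{j=0}^{m-1}\frac{1}{m-j}\left((-1)^{m-1}\Big(\frac{z}{1+z}\Big)^{m-j}+(-1)^j\Big(\frac{z}{1-z}\Big)^{m-j}\right)$$ $$+\frac{1}{2m}\left((-1)^{m-1}\Big(1+\frac z2\Big)\Big(\frac{z}{1+z}\Big)^m-\Big(1-\frac z2\Big)\Big(\frac{z}{1-z}\Big)^m\right)$$ $$+\frac{1}{4(m-1)}\left((-1)^m(1+z)\Big(\frac{z}{1+z}\Big)^m+(1-z)\Big(\frac{z}{1-z}\Big)^m\right)+\frac{(-1)^m}{4z}\ln\Big(\frac{1+z}{1-z}\Big).$$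
   Context: $\ln$ denotes the principal branch of the logarithm. *)

theory Defs
  imports "HOL-Analysis.Analysis"
begin

end

theory Submission
  imports Defs
begin

(*
  Partial fractions split 1/((N-1)N(N+1)) as (1/2)/(N-1) - 1/N + (1/2)/(N+1), so the series
  is a combination of the series sum C(N,m) z^N/(N+c) for c = -1, 0, 1.  All of them come from
  the generating function sum C(N,j) z^N = z^j/(1-z)^(j+1): for c = 0 by the absorption identity,
  for c = -1 by Pascal's rule, and for c = 1 by the recursion C(N,m+1) = C(N+1,m+1) - C(N,m),
  which descends to sum z^(N+1)/(N+1) = -Ln(1-z).  The even-indexed terms are finally the
  average of the series at z and at -z.
*)

lemma sums_even_terms:
  fixes f :: "nat \<Rightarrow> 'a::real_normed_field"
  assumes "f sums s" and "(\<lambda>n. (-1)^n * f n) sums t"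
  shows "(\<lambda>k. f (2 * k)) sums ((s + t) / 2)"
proof -
  have "(\<lambda>n. (f n + (-1)^n * f n) / 2) sums ((s + t) / 2)"
    by (intro sums_divide sums_add assms)
  moreover have "(f n + (-1)^n * f n) / 2 = (if even n then f n else 0)" for n
    by auto
  ultimately have "(\<lambda>n. if even n then f n else 0) sums ((s + t) / 2)"
    by simp
  then show ?thesis
    by (subst (asm) sums_mono_reindex[of "\<lambda>k. 2 * k", symmetric]) (auto simp: strict_mono_def)
qed

lemma Ln_divide_Re_pos:
  assumes "0 < Re a" "0 < Re b"
  shows "Ln (a / b) = Ln a - Ln b"
proof -
  have "a \<noteq> 0" "b \<noteq> 0" using assms by auto
  have "b \<notin> \<real>\<^sub>\<le>\<^sub>0" using assms(2) by (auto simp: complex_nonpos_Reals_iff)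
  then have inv: "Ln (inverse b) = - Ln b" by (rule Ln_inverse)
  have "Ln (a * inverse b) = Ln a + Ln (inverse b)"
    using assms Re_Ln_pos_lt_imp[of a] Re_Ln_pos_lt_imp[of b] \<open>a \<noteq> 0\<close> \<open>b \<noteq> 0\<close>
    by (intro Ln_times_simple) (auto simp: inv)
  then show ?thesis by (simp add: divide_inverse inv)
qed

lemma divide_consecutive_triple:
  fixes n :: "'a::field_char_0"
  assumes "n \<noteq> 0" "n - 1 \<noteq> 0" "n + 1 \<noteq> 0"
  shows "x / ((n - 1) * n * (n + 1)) = x / (n - 1) / 2 - x / n + x / (n + 1) / 2"
proof -
  have "2 * (n - 1) \<noteq> 0" "2 * (n + 1) \<noteq> 0"
    using assms by (metis mult_eq_0_iff zero_neq_numeral)+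
  with assms show ?thesis
    by (simp add: divide_simps) (simp add: algebra_simps)
qed

lemma choose_power_sums_Suc:
  fixes z :: "'a::{real_normed_field,banach}"
  assumes z: "norm z < 1" and s: "(\<lambda>N. of_nat (N choose j) * z^N) sums s"
    and summable_norm: "summable (\<lambda>N. norm (of_nat (N choose j) * z^N))"
  shows "(\<lambda>N. of_nat (N choose Suc j) * z^N) sums (z * s / (1 - z))"
proof -
  have geom: "summable (\<lambda>k. norm (z^k))"
    using z by (simp add: norm_power summable_geometric)
  have convolution: "(\<Sum>i\<le>k. of_nat (i choose j) * z^i * z^(k-i)) = of_nat (Suc k choose Suc j) * z^k"
    for k
  proof -
    have "(\<Sum>i\<le>k. of_nat (i choose j) * z^i * z^(k-i)) = of_nat (\<Sum>i\<le>k. i choose j) * z^k"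
      by (simp add: sum_distrib_right mult.assoc flip: power_add)
    then show ?thesis by (simp add: sum_choose_upper)
  qed
  have "(\<lambda>k. \<Sum>i\<le>k. of_nat (i choose j) * z^i * z^(k-i)) sums (s * (1 / (1 - z)))"
    using Cauchy_product_sums[OF summable_norm geom] s geometric_sums[OF z] by (simp add: sums_iff)
  then have "(\<lambda>k. z * (of_nat (Suc k choose Suc j) * z^k)) sums (z * (s / (1 - z)))"
    unfolding convolution by (intro sums_mult) simp
  then have "(\<lambda>k. of_nat (Suc k choose Suc j) * z^Suc k) sums (z * s / (1 - z))"
    by (simp add: mult_ac)
  then show ?thesis
    by (subst (asm) sums_Suc_iff) simp
qed

lemma choose_power_sums_real:
  fixes x :: real
  assumes "0 \<le> x" "x < 1"
  shows "(\<lambda>N. of_nat (N choose j) * x^N) sums (x^j / (1 - x)^Suc j)"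
proof (induction j)
  case 0
  then show ?case using geometric_sums[of x] assms by simp
next
  case (Suc j)
  have "summable (\<lambda>N. norm (of_nat (N choose j) * x^N))"
    using sums_summable[OF Suc.IH] assms by simp
  from choose_power_sums_Suc[OF _ Suc.IH this] assms show ?case
    by (simp add: field_simps)
qed

lemma choose_power_sums:
  fixes z :: "'a::{real_normed_field,banach}"
  assumes "norm z < 1"
  shows "(\<lambda>N. of_nat (N choose j) * z^N) sums (z^j / (1 - z)^Suc j)"
proof (induction j)
  case 0
  then show ?case using geometric_sums[of z] assms by simp
next
  case (Suc j)
  have "summable (\<lambda>N. norm (of_nat (N choose j) * z^N))"
    using sums_summable[OF choose_power_sums_real[of "norm z" j]] assms
    by (simp add: norm_mult norm_power)
  from choose_power_sums_Suc[OF assms Suc.IH this] assms show ?case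
    by (simp add: field_simps)
qed

lemma choose_power_div_sums:
  fixes z :: "'a::{real_normed_field,banach}"
  assumes z: "norm z < 1" and j: "j \<ge> 1"
  shows "(\<lambda>N. of_nat (N choose j) * z^N / of_nat N) sums ((z / (1 - z))^j / of_nat j)"
proof -
  obtain i where i: "j = Suc i" using j by (cases j) auto
  have absorption: "of_nat (Suc i) * of_nat (Suc N choose Suc i) = (of_nat (Suc N) * of_nat (N choose i) :: 'a)"
    for N by (metis Suc_times_binomial of_nat_mult)
  have "(\<lambda>N. z / of_nat (Suc i) * (of_nat (N choose i) * z^N)) sums
        (z / of_nat (Suc i) * (z^i / (1 - z)^Suc i))"
    by (rule sums_mult[OF choose_power_sums[OF z]])
  moreover have "z / of_nat (Suc i) * (of_nat (N choose i) * z^N) =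
      of_nat (Suc N choose Suc i) * z^Suc N / of_nat (Suc N)" for N
    using absorption[of N] by (simp add: field_simps del: of_nat_Suc binomial_Suc_Suc)
  moreover have "z / of_nat (Suc i) * (z^i / (1 - z)^Suc i) = (z / (1 - z))^Suc i / of_nat (Suc i)"
    by (simp add: field_simps del: of_nat_Suc)
  ultimately have "(\<lambda>N. of_nat (Suc N choose Suc i) * z^Suc N / of_nat (Suc N)) sums
       ((z / (1 - z))^Suc i / of_nat (Suc i))"
    by simp
  then show ?thesis
    unfolding i by (subst (asm) sums_Suc_iff) simp
qed

lemma choose_power_div_pred_sums:
  fixes z :: "'a::{real_normed_field,banach}"
  assumes z: "norm z < 1" and m: "m \<ge> 2"
  shows "(\<lambda>N. of_nat (N choose m) * z^N / of_nat (N - 1)) sums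
     ((1 - z) * (z / (1 - z))^m / of_nat (m - 1) + z * (z / (1 - z))^m / of_nat m)"
proof -
  obtain p where p: "m = Suc p" "p \<ge> 1" using m by (cases m) auto
  have "z \<noteq> 1" using z by auto
  have "(\<lambda>N. z * (of_nat (N choose p) * z^N / of_nat N + of_nat (N choose m) * z^N / of_nat N)) sums
     (z * ((z / (1 - z))^p / of_nat p + (z / (1 - z))^m / of_nat m))"
    by (intro sums_mult sums_add choose_power_div_sums z) (use p in auto)
  moreover have "z * (of_nat (N choose p) * z^N / of_nat N + of_nat (N choose m) * z^N / of_nat N) =
      of_nat (Suc N choose m) * z^Suc N / of_nat (Suc N - 1)" for N
    by (simp add: p add_divide_distrib distrib_left distrib_right mult.left_commute)
  moreover have "z * ((z / (1 - z))^p / of_nat p + (z / (1 - z))^m / of_nat m) =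
      (1 - z) * (z / (1 - z))^m / of_nat (m - 1) + z * (z / (1 - z))^m / of_nat m"
    using \<open>z \<noteq> 1\<close> by (simp add: p distrib_left)
  ultimately have "(\<lambda>N. of_nat (Suc N choose m) * z^Suc N / of_nat (Suc N - 1)) sums
     ((1 - z) * (z / (1 - z))^m / of_nat (m - 1) + z * (z / (1 - z))^m / of_nat m)"
    by simp
  then show ?thesis
    using p by (subst (asm) sums_Suc_iff) simp
qed

text \<open>The primitive of z^m/(1-z)^(m+1) vanishing at 0.\<close>

definition binomial_primitive :: "nat \<Rightarrow> complex \<Rightarrow> complex" where
  "binomial_primitive m z =
     (\<Sum>i<m. (-1)^i * (z / (1 - z))^(m - i) / of_nat (m - i)) - (-1)^m * Ln (1 - z)"

lemma binomial_primitive_Suc: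
  "binomial_primitive (Suc m) z = (z / (1 - z))^Suc m / of_nat (Suc m) - binomial_primitive m z"
  unfolding binomial_primitive_def sum.lessThan_Suc_shift by (simp add: sum_negf)

lemma binomial_primitive_sums:
  fixes z :: complex
  assumes z: "norm z < 1"
  shows "(\<lambda>N. of_nat (N choose m) * z^Suc N / of_nat (Suc N)) sums binomial_primitive m z"
proof (induction m)
  case 0
  \<comment> \<open>the term for N = 0 is 1/0 = 0\<close>
  have "(\<lambda>N. z^N / of_nat N) sums - Ln (1 - z)"
    using sums_minus[OF Ln_series'[of "-z"]] z by simp
  then have "(\<lambda>N. z^Suc N / of_nat (Suc N)) sums - Ln (1 - z)"
    by (subst sums_Suc_iff) simp
  then show ?case
    by (simp add: binomial_primitive_def)
next
  case (Suc m)
  have "(\<lambda>N. of_nat (Suc N choose Suc m) * z^Suc N / of_nat (Suc N)) sums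
      ((z / (1 - z))^Suc m / of_nat (Suc m))"
    using choose_power_div_sums[OF z, of "Suc m"] by (subst sums_Suc_iff) simp
  from sums_diff[OF this Suc.IH]
  have "(\<lambda>N. of_nat (Suc N choose Suc m) * z^Suc N / of_nat (Suc N)
      - of_nat (N choose m) * z^Suc N / of_nat (Suc N)) sums binomial_primitive (Suc m) z"
    by (simp only: binomial_primitive_Suc)
  moreover have "of_nat (Suc N choose Suc m) * z^Suc N / of_nat (Suc N)
      - of_nat (N choose m) * z^Suc N / of_nat (Suc N) = of_nat (N choose Suc m) * z^Suc N / of_nat (Suc N)"
    for N by (simp add: add_divide_distrib distrib_left distrib_right)
  ultimately show ?case
    by simp
qed

lemma binomial_primitive_uminus:
  "binomial_primitive m (-z) = (-1)^m * ((\<Sum>i<m. (z / (1 + z))^(m - i) / of_nat (m - i)) - Ln (1 + z))"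
proof -
  let ?u = "z / (1 + z)"
  have "(-1)^i * (- ?u)^(m - i) = (-1)^m * ?u^(m - i)" if "i < m" for i
  proof -
    have "(-1)^i * (- ?u)^(m - i) = ((-1)^i * (-1)^(m - i)) * ?u^(m - i)"
      by (simp only: power_minus[of ?u] mult.assoc)
    also have "(-1)^i * (-1)^(m - i) = (-1::complex)^m"
      using that by (simp flip: power_add)
    finally show ?thesis .
  qed
  then have "(\<Sum>i<m. (-1)^i * (- ?u)^(m - i) / of_nat (m - i)) =
      (-1)^m * (\<Sum>i<m. ?u^(m - i) / of_nat (m - i))"
    unfolding sum_distrib_left by (intro sum.cong) (simp_all add: mult.assoc)
  moreover have "(-z) / (1 - (-z)) = - ?u"
    by simp
  ultimately show ?thesis
    unfolding binomial_primitive_def by (simp add: right_diff_distrib)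
qed

definition binomial_triple_series :: "nat \<Rightarrow> complex \<Rightarrow> complex" where
  "binomial_triple_series m z =
     (1 - z) * (z / (1 - z))^m / (2 * of_nat (m - 1)) - (1 - z / 2) * (z / (1 - z))^m / of_nat m
     + binomial_primitive m z / (2 * z)"

lemma binomial_triple_series_sums:
  fixes z :: complex
  assumes z: "norm z < 1" "z \<noteq> 0" and m: "m \<ge> 2"
  shows "(\<lambda>N. of_nat (N choose m) * z^N / (of_nat (N - 1) * of_nat N * of_nat (N + 1))) sums
    binomial_triple_series m z"
proof -
  have "(\<lambda>N. 1 / z * (of_nat (N choose m) * z^Suc N / of_nat (Suc N))) sums (1 / z * binomial_primitive m z)"
    by (intro sums_mult binomial_primitive_sums z)
  then have "(\<lambda>N. of_nat (N choose m) * z^N / of_nat (N + 1)) sums (binomial_primitive m z / z)"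
    using z(2) by simp
  then have "(\<lambda>N. of_nat (N choose m) * z^N / of_nat (N - 1) / 2 - of_nat (N choose m) * z^N / of_nat N
      + of_nat (N choose m) * z^N / of_nat (N + 1) / 2) sums
    (((1 - z) * (z / (1 - z))^m / of_nat (m - 1) + z * (z / (1 - z))^m / of_nat m) / 2
      - (z / (1 - z))^m / of_nat m + binomial_primitive m z / z / 2)"
    using m by (intro sums_add sums_diff sums_divide choose_power_div_pred_sums choose_power_div_sums z) auto
  moreover have "of_nat (N choose m) * z^N / of_nat (N - 1) / 2 - of_nat (N choose m) * z^N / of_nat N
      + of_nat (N choose m) * z^N / of_nat (N + 1) / 2 =
    of_nat (N choose m) * z^N / (of_nat (N - 1) * of_nat N * of_nat (N + 1))" for N
  proof (cases "N < m")
    case False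
    then have "N \<ge> 2" using m by simp
    then have pred: "(of_nat (N - 1) :: complex) = of_nat N - 1"
      by simp
    have "(of_nat N :: complex) \<noteq> 0" "(of_nat N :: complex) - 1 \<noteq> 0"
      using \<open>N \<ge> 2\<close> unfolding pred[symmetric] by simp_all
    moreover have "(of_nat N :: complex) + 1 \<noteq> 0"
      using of_nat_neq_0[of N, where 'a=complex] by (simp add: add.commute)
    ultimately show ?thesis
      unfolding pred of_nat_add of_nat_1 by (rule divide_consecutive_triple[symmetric])
  qed (simp add: binomial_eq_0)
  moreover have "((1 - z) * W / a + z * W / b) / 2 - W / b + P / z / 2 =
      (1 - z) * W / (2 * a) - (1 - z / 2) * W / b + P / (2 * z)" for W P a b :: complex
    by (simp add: algebra_simps add_divide_distrib diff_divide_distrib)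
  ultimately show ?thesis
    unfolding binomial_triple_series_def by (simp only:)
qed

lemma binomial_triple_series_even_part:
  fixes m :: nat and z :: complex
  assumes m: "m \<ge> 2" and z: "z \<noteq> 0" "norm z < 1"
  shows "(binomial_triple_series m z + binomial_triple_series m (-z)) / 2 =
         1 / (4*z) * (\<Sum>j<m. 1 / of_nat (m - j) *
              ((-1) ^ (m - 1) * (z / (1 + z)) ^ (m - j) + (-1) ^ j * (z / (1 - z)) ^ (m - j)))
          + 1 / (2 * of_nat m) *
              ((-1) ^ (m - 1) * (1 + z / 2) * (z / (1 + z)) ^ m - (1 - z / 2) * (z / (1 - z)) ^ m)
          + 1 / (4 * of_nat (m - 1)) *
              ((-1) ^ m * (1 + z) * (z / (1 + z)) ^ m + (1 - z) * (z / (1 - z)) ^ m)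
          + (-1) ^ m / (4*z) * Ln ((1 + z) / (1 - z))"
proof -
  define u where "u = z / (1 + z)"
  define w where "w = z / (1 - z)"
  define sg :: complex where "sg = (-1)^m"
  define Su where "Su = (\<Sum>j<m. u^(m - j) / of_nat (m - j))"
  define Sw where "Sw = (\<Sum>j<m. (-1)^j * w^(m - j) / of_nat (m - j))"
  have "0 < Re (1 + z)" "0 < Re (1 - z)"
    using abs_Re_le_cmod[of z] z by auto
  then have Ln: "Ln ((1 + z) / (1 - z)) = Ln (1 + z) - Ln (1 - z)"
    by (rule Ln_divide_Re_pos)
  have sign: "(-1::complex)^(m - 1) = - sg"
    using m unfolding sg_def by (cases m) auto
  have "(-z) / (1 - (-z)) = - u"
    unfolding u_def by simp
  then have neg_power: "((-z) / (1 - (-z)))^m = sg * u^m"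
    unfolding sg_def by (simp only: power_minus[of u])
  have sum: "(\<Sum>j<m. 1 / of_nat (m - j) * (- sg * u^(m - j) + (-1)^j * w^(m - j))) = Sw - sg * Su"
    unfolding Su_def Sw_def sum_distrib_left by (simp add: sum_subtractf algebra_simps)
  have algebra: "((1 - z) * W / (2 * a) - (1 - z / 2) * W / b + (S1 - s * L1) / (2 * z)
      + ((1 - - z) * (s * U) / (2 * a) - (1 - - z / 2) * (s * U) / b + s * (S2 - L2) / (2 * - z))) / 2
    = 1 / (4 * z) * (S1 - s * S2) + 1 / (2 * b) * (- s * (1 + z / 2) * U - (1 - z / 2) * W)
      + 1 / (4 * a) * (s * (1 + z) * U + (1 - z) * W) + s / (4 * z) * (L2 - L1)"
    if "a \<noteq> 0" "b \<noteq> 0" for W U S1 S2 L1 L2 s a b :: complex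
    using that z(1) by (simp add: field_simps)
  have "of_nat (m - 1) \<noteq> (0::complex)" "of_nat m \<noteq> (0::complex)"
    using m by simp_all
  then show ?thesis
    unfolding binomial_triple_series_def binomial_primitive_uminus
    unfolding binomial_primitive_def neg_power Ln sign u_def[symmetric] w_def[symmetric] sg_def[symmetric] sum
      Su_def[symmetric] Sw_def[symmetric]
    by (rule algebra)
qed

theorem lemma5:
  fixes m :: nat and z :: complex
  assumes "m \<ge> 2" and "0 < norm z" and "norm z < 1"
  shows "(\<lambda>k. let n = Suc k in
            of_nat ((2*n) choose m) * z ^ (2*n)
            / (of_nat (2*n - 1) * of_nat (2*n) * of_nat (2*n + 1)))
         sums
         (1 / (4*z) * (\<Sum>j<m. 1 / of_nat (m - j) *
              ((-1) ^ (m - 1) * (z / (1 + z)) ^ (m - j) + (-1) ^ j * (z / (1 - z)) ^ (m - j)))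
          + 1 / (2 * of_nat m) *
              ((-1) ^ (m - 1) * (1 + z / 2) * (z / (1 + z)) ^ m - (1 - z / 2) * (z / (1 - z)) ^ m)
          + 1 / (4 * of_nat (m - 1)) *
              ((-1) ^ m * (1 + z) * (z / (1 + z)) ^ m + (1 - z) * (z / (1 - z)) ^ m)
          + (-1) ^ m / (4*z) * Ln ((1 + z) / (1 - z)))"
proof -
  let ?a = "\<lambda>x N. of_nat (N choose m) * x^N / (of_nat (N - 1) * of_nat N * of_nat (N + 1)) :: complex"
  have z: "z \<noteq> 0" "norm (-z) < 1" "-z \<noteq> 0"
    using assms by auto
  have "?a z sums binomial_triple_series m z"
    using assms z by (intro binomial_triple_series_sums) auto
  moreover have "(\<lambda>N. (-1)^N * ?a z N) sums binomial_triple_series m (-z)"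
    using binomial_triple_series_sums[OF z(2,3) assms(1)] by (simp add: power_minus[of z] mult_ac)
  ultimately have "(\<lambda>k. ?a z (2 * k)) sums
      ((binomial_triple_series m z + binomial_triple_series m (-z)) / 2)"
    by (rule sums_even_terms)
  then have "(\<lambda>k. ?a z (2 * Suc k)) sums
      ((binomial_triple_series m z + binomial_triple_series m (-z)) / 2)"
    by (subst sums_Suc_iff) simp
  then show ?thesis
    using binomial_triple_series_even_part[OF assms(1) z(1) assms(3)] by (simp add: Let_def)
qed

end
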